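(* Let $\beta>0$ and let $E'=\{h_1,\dots,h_L\}\subset\mathbb R$ with $2\le L<\infty$. For $m\in[-1,1]$ define $\hat B(m)\in\mathbb R^L$ by $$\hat B(m)_i=\log\frac{\cosh(\beta m+h_i)}{\cosh h_i}-\frac1L\sum_{j=1}^L\log\frac{\cosh(\beta m+h_j)}{\cosh h_j},\qquad i=1,\dots,L.$$ Then the map $m\mapsto\hat B(m)$ is injective.
   Context: This is the stability vector $\hat B_{\nu_m}$ of the mean-field random-field Ising model with $F(\nu)=-\beta(\nu(+)^2+\nu(-)^2)$, local measures $\alpha[h](\sigma)=e^{h\sigma}/(2\cosh h)$ for $\sigma\in\{-1,+1\}$, evaluated at the measure $\nu_m$ on $\{-1,+1\}$ with mean $m$. *)

theory Defs
  imports Complex_Main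
begin

definition Bhat :: "real \<Rightarrow> (nat \<Rightarrow> real) \<Rightarrow> nat \<Rightarrow> real \<Rightarrow> nat \<Rightarrow> real" where
  "Bhat \<beta> h L m i =
     ln (cosh (\<beta> * m + h i) / cosh (h i))
     - (1 / real L) * (\<Sum>j<L. ln (cosh (\<beta> * m + h j) / cosh (h j)))"

end

theory Submission
  imports Defs
begin

text \<open>Only differences of components matter, since the mean subtracted in \<open>Bhat\<close> cancels.
  For two fields \<open>a \<noteq> b\<close> such a difference is \<open>ln (cosh (\<beta> m + a) / cosh (\<beta> m + b))\<close> up to a
  constant, and by the identity
  \<open>cosh (x + a) cosh (y + b) - cosh (y + a) cosh (x + b) = sinh (x - y) sinh (a - b)\<close>
  this ratio is an injective function of \<open>\<beta> m\<close>.\<close>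

lemma cosh_mult_cross_diff:
  fixes x y a b :: real
  shows "cosh (x + a) * cosh (y + b) - cosh (y + a) * cosh (x + b) = sinh (x - y) * sinh (a - b)"
  by (simp add: cosh_add sinh_diff algebra_simps)

lemma cosh_ratio_shift_eq_iff:
  fixes x y a b :: real
  assumes "a \<noteq> b"
  shows "cosh (x + a) / cosh (x + b) = cosh (y + a) / cosh (y + b) \<longleftrightarrow> x = y"
proof
  assume "cosh (x + a) / cosh (x + b) = cosh (y + a) / cosh (y + b)"
  then have "cosh (x + a) * cosh (y + b) - cosh (y + a) * cosh (x + b) = 0"
    by (simp add: divide_simps)
  then have "sinh (x - y) * sinh (a - b) = 0"
    by (simp only: cosh_mult_cross_diff)
  then show "x = y"
    using assms by simp
qed simp

lemma Bhat_diff: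
  "Bhat \<beta> h L m i - Bhat \<beta> h L m j
     = ln (cosh (\<beta> * m + h i) / cosh (\<beta> * m + h j)) - ln (cosh (h i) / cosh (h j))"
  by (simp add: Bhat_def ln_div)

theorem mainTheorem5:
  fixes \<beta> :: real and h :: "nat \<Rightarrow> real" and L :: nat
  assumes "\<beta> > 0" and "2 \<le> L" and "inj_on h {..<L}"
  shows "\<forall>m1\<in>{-1..1}. \<forall>m2\<in>{-1..1}.
           (\<forall>i<L. Bhat \<beta> h L m1 i = Bhat \<beta> h L m2 i) \<longrightarrow> m1 = m2"
proof (intro ballI impI)
  fix m1 m2 :: real
  assume "\<forall>i<L. Bhat \<beta> h L m1 i = Bhat \<beta> h L m2 i"
  then have "Bhat \<beta> h L m1 0 - Bhat \<beta> h L m1 1 = Bhat \<beta> h L m2 0 - Bhat \<beta> h L m2 1"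
    using assms(2) by simp
  then have "cosh (\<beta> * m1 + h 0) / cosh (\<beta> * m1 + h 1)
      = cosh (\<beta> * m2 + h 0) / cosh (\<beta> * m2 + h 1)"
    by (simp add: Bhat_diff)
  moreover have "h 0 \<noteq> h 1"
    using assms(2,3) by (auto dest: inj_onD)
  ultimately have "\<beta> * m1 = \<beta> * m2"
    by (simp add: cosh_ratio_shift_eq_iff)
  then show "m1 = m2"
    using assms(1) by simp
qed

end
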